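(* Let $\pi$ be a uniformly random permutation of $\{1,\dots,m\}$, viewed as an instance of the fully labeled one-dimensional rearrangement problem (LOR). Let $D_S(\pi)$ be the end-effector travel of the plan produced by SweepCyclesLOR, and let $D^*(\pi)$ be the minimum end-effector travel over all valid plans for $\pi$ that use the minimum possible number of pick-n-swaps. Then SweepCyclesLOR minimizes the number of pick-n-swaps and its travel is optimal in the asymptotic sense in expectation: $\mathbb E[D_S(\pi)]/\mathbb E[D^*(\pi)]\to 1$ as $m\to\infty$.
   Context: Setting (LOR). A row of $m$ cells $1,\dots,m$, cell $i$ located at the point $i$ on the real line. Each cell initially holds exactly one item; items carry distinct labels $1,\dots,m$. An instance is a permutation $\pi$ of $\{1,\dots,m\}$, where $\pi_i$ is the label of the item initially in cell $i$; the goal is that item $i$ ends in cell $i$ for every $i$. A robot end-effector can hold at most one item; it starts at the rest position $p_0=$ cell $1$ holding nothing. A pick-n-swap operation performed at a cell $p$ is: if the end-effector holds nothing, pick up the item in $p$; if it holds an item and $p$ contains an item, exchange the two; if it holds an item and $p$ is empty, put the held item into $p$. A plan is a sequence $P=(p_0,p_1,\dots,p_N)$ of cells: the end-effector travels from $p_0$ to $p_1$, performs a pick-n-swap there, travels to $p_2$, and so on, and finally returns to $p_{N+1}:=p_0$. It is valid if at the end every item $i$ is in cell $i$ and the end-effector holds nothing. $N$ is the number of pick-n-swaps and the end-effector travel is $D(P)=\sum_{i=0}^{N}|p_i-p_{i+1}|$. SweepCyclesLOR: while some cell $i$ holds an item with label $\ne i$, let $i$ be the smallest such cell; go to $i$ and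 pick up its item, say with label $g$; while $g\neq i$, go to cell $g$ and swap (item $g$ is placed in cell $g$ and the item previously in cell $g$, with label $g'$, becomes held; set $g:=g'$); finally go to cell $i$ and place the held item. When no misplaced item remains, return to cell $1$. *)

theory Defs
  imports Complex_Main "HOL-Combinatorics.Permutations"
begin

text \<open>A state: contents of cells (None = empty) and the item held by the end-effector.\<close>
type_synonym lor_state = "(nat \<Rightarrow> nat option) \<times> nat option"

text \<open>Pick-n-swap at cell p. In all three cases of the paper (pick, exchange, place)
  the effect is: the cell receives what was held, and the end-effector receives
  what was in the cell.\<close>
definition pick_n_swap :: "nat \<Rightarrow> lor_state \<Rightarrow> lor_state" where
  "pick_n_swap p s = ((fst s)(p := snd s), fst s p)"

fun exec_plan :: "nat list \<Rightarrow> lor_state \<Rightarrow> lor_state" where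
  "exec_plan [] s = s"
| "exec_plan (p # ps) s = exec_plan ps (pick_n_swap p s)"

definition init_state :: "nat \<Rightarrow> (nat \<Rightarrow> nat) \<Rightarrow> lor_state" where
  "init_state m \<pi> = ((\<lambda>i. if i \<in> {1..m} then Some (\<pi> i) else None), None)"

definition goal_state :: "nat \<Rightarrow> lor_state" where
  "goal_state m = ((\<lambda>i. if i \<in> {1..m} then Some i else None), None)"

text \<open>A plan is the list (p_1,...,p_N) of pick-n-swap cells; p_0 = 1 is implicit.\<close>
definition valid_plan :: "nat \<Rightarrow> (nat \<Rightarrow> nat) \<Rightarrow> nat list \<Rightarrow> bool" where
  "valid_plan m \<pi> ps \<longleftrightarrow> set ps \<subseteq> {1..m} \<and> exec_plan ps (init_state m \<pi>) = goal_state m"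

definition cell_dist :: "nat \<Rightarrow> nat \<Rightarrow> nat" where
  "cell_dist a b = (if a \<le> b then b - a else a - b)"

fun travel_from :: "nat \<Rightarrow> nat list \<Rightarrow> nat" where
  "travel_from p [] = cell_dist p 1"
| "travel_from p (q # qs) = cell_dist p q + travel_from q qs"

definition travel :: "nat list \<Rightarrow> nat" where
  "travel ps = travel_from 1 ps"

definition min_swaps :: "nat \<Rightarrow> (nat \<Rightarrow> nat) \<Rightarrow> nat" where
  "min_swaps m \<pi> = (LEAST n. \<exists>ps. valid_plan m \<pi> ps \<and> length ps = n)"

definition opt_travel :: "nat \<Rightarrow> (nat \<Rightarrow> nat) \<Rightarrow> nat" where
  "opt_travel m \<pi> =
     (LEAST d. \<exists>ps. valid_plan m \<pi> ps \<and> length ps = min_swaps m \<pi> \<and> travel ps = d)"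

text \<open>Inner loop, started at cell i holding label g; a is the current arrangement
  (a c = label of item in cell c). Fuel argument bounds the number of iterations
  (fuel m always suffices).\<close>
fun sweep_inner :: "nat \<Rightarrow> nat \<Rightarrow> (nat \<Rightarrow> nat) \<Rightarrow> nat \<Rightarrow> nat list \<times> (nat \<Rightarrow> nat)" where
  "sweep_inner 0 i a g = ([i], a(i := g))"
| "sweep_inner (Suc f) i a g =
     (if g = i then ([i], a(i := g))
      else (let (ps, a') = sweep_inner f i (a(g := g)) (a g) in (g # ps, a')))"

fun sweep_outer :: "nat \<Rightarrow> nat \<Rightarrow> (nat \<Rightarrow> nat) \<Rightarrow> nat list" where
  "sweep_outer 0 m a = []"
| "sweep_outer (Suc f) m a =
     (if \<exists>i\<in>{1..m}. a i \<noteq> i then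
        (let i = (LEAST i. i \<in> {1..m} \<and> a i \<noteq> i);
             (ps, a') = sweep_inner m i a (a i)
         in i # ps @ sweep_outer f m a')
      else [])"

text \<open>The plan produced by SweepCyclesLOR (the final return to cell 1 is
  accounted for in travel).\<close>
definition sweep_plan :: "nat \<Rightarrow> (nat \<Rightarrow> nat) \<Rightarrow> nat list" where
  "sweep_plan m \<pi> = sweep_outer m m \<pi>"

definition perm_expect :: "nat \<Rightarrow> ((nat \<Rightarrow> nat) \<Rightarrow> real) \<Rightarrow> real" where
  "perm_expect m X =
     (\<Sum>\<pi>\<in>{\<pi>. \<pi> permutes {1..m}}. X \<pi>) / real (card {\<pi>. \<pi> permutes {1..m}})"

end

theory Submission
  imports Defs
begin

text \<open>
  SweepCyclesLOR treats the cycles of \<open>\<pi>\<close> one after the other, in the order of their smallest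
  cells, and spends \<open>|C| + 1\<close> pick-n-swaps on a cycle \<open>C\<close>. No valid plan can do better on
  \<open>C\<close>: the number of misplaced cells of \<open>C\<close>, plus one as long as no item of \<open>C\<close> has been
  touched, drops by at most one per pick-n-swap inside \<open>C\<close> and never otherwise.

  For the travel, the sum of the distances of all items to their home cells (the held item
  counted from the end-effector) is unchanged by a pick-n-swap and drops by at most the
  distance moved, so every valid plan travels at least \<open>T(\<pi>) = \<Sum>\<^sub>i |i - \<pi> i|\<close>.
  SweepCyclesLOR travels at most \<open>T(\<pi>) + 2m\<close>: going around a cycle costs exactly its share
  of \<open>T(\<pi>)\<close>, and between cycles the end-effector only moves to the right. Finally
  the expectation of \<open>T(\<pi>)\<close> is at least \<open>(m\<^sup>2 - 1) / 6\<close>, so the ratio of the expected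
  travels lies between \<open>1\<close> and \<open>1 + 24 / m\<close>.
\<close>

section \<open>Walking around a cycle\<close>

abbreviation follows :: "('a \<Rightarrow> 'a) \<Rightarrow> 'a list \<Rightarrow> bool" where
  "follows f xs \<equiv> successively (\<lambda>x y. y = f x) xs"

lemma successively_mono_butlast:
  "successively P xs \<Longrightarrow> (\<And>x y. x \<in> set (butlast xs) \<Longrightarrow> P x y \<Longrightarrow> Q x y) \<Longrightarrow> successively Q xs"
  by (induction xs rule: induct_list012) simp_all

lemma set_butlast_distinct: "distinct xs \<Longrightarrow> set (butlast xs) = set xs - {last xs}"
  by (cases xs rule: rev_cases) auto

lemma follows_butlast_image: "follows f xs \<Longrightarrow> x \<in> set (butlast xs) \<Longrightarrow> f x \<in> set (tl xs)"
  by (induction xs rule: induct_list012) auto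

lemma follows_butlast_moves: "follows f xs \<Longrightarrow> distinct xs \<Longrightarrow> x \<in> set (butlast xs) \<Longrightarrow> f x \<noteq> x"
  by (induction xs rule: induct_list012) auto

definition cycle_from :: "('a \<Rightarrow> 'a) \<Rightarrow> 'a \<Rightarrow> 'a list \<Rightarrow> bool" where
  "cycle_from f i ps \<longleftrightarrow> follows f (i # ps) \<and> distinct ps \<and> ps \<noteq> [] \<and> last ps = i"

lemma cycle_from_last_in: "cycle_from f i ps \<Longrightarrow> i \<in> set ps"
  unfolding cycle_from_def by auto

lemma cycle_from_set: "cycle_from f i ps \<Longrightarrow> set (butlast (i # ps)) = set ps"
  unfolding cycle_from_def by (cases ps rule: rev_cases) auto

lemma cycle_from_image: "cycle_from f i ps \<Longrightarrow> f ` set ps \<subseteq> set ps"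
  using follows_butlast_image[of f "i # ps"] cycle_from_set[of f i ps]
  unfolding cycle_from_def by auto

lemma cycle_from_moves:
  assumes "cycle_from f i ps" "x \<in> set ps" "x \<noteq> i"
  shows "f x \<noteq> x"
proof -
  have "follows f ps" "distinct ps" "last ps = i"
    using assms(1) unfolding cycle_from_def by (auto simp: successively_Cons)
  moreover from this have "x \<in> set (butlast ps)"
    using assms(2,3) by (simp add: set_butlast_distinct)
  ultimately show ?thesis
    by (metis follows_butlast_moves)
qed

lemma cycle_from_Cons:
  assumes "cycle_from (f(g := g, i := f g)) i ps" "f i = g" "g \<noteq> i"
  shows "g \<notin> set ps \<and> cycle_from f i (g # ps)"
proof -
  let ?f' = "f(g := g, i := f g)"
  have chain: "follows ?f' ps" and "hd ps = f g" "distinct ps" "ps \<noteq> []" "last ps = i"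
    using assms(1,3) by (auto simp: cycle_from_def successively_Cons)
  then have butlast: "set (butlast ps) = set ps - {i}"
    by (simp add: set_butlast_distinct)
  have "g \<notin> set ps"
  proof
    assume "g \<in> set ps"
    then have "?f' g \<noteq> g"
      using follows_butlast_moves[OF chain \<open>distinct ps\<close>] butlast assms(3) by blast
    then show False
      using assms(3) by simp
  qed
  moreover have "follows f ps"
    using butlast \<open>g \<notin> set ps\<close> by (intro successively_mono_butlast[OF chain]) auto
  ultimately show ?thesis
    using assms(2) \<open>hd ps = f g\<close> \<open>distinct ps\<close> \<open>ps \<noteq> []\<close> \<open>last ps = i\<close>
    unfolding cycle_from_def by (simp add: successively_Cons)
qed

lemma exec_plan_append: "exec_plan (xs @ ys) s = exec_plan ys (exec_plan xs s)"
  by (induction xs arbitrary: s) auto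

lemma exec_plan_chain:
  assumes "successively (\<lambda>x y. c x = Some y) ps" "distinct ps" "ps \<noteq> []" "c (last ps) = None"
  shows "exec_plan ps (c, Some (hd ps)) = (\<lambda>x. if x \<in> set ps then Some x else c x, None)"
  using assms
proof (induction ps arbitrary: c)
  case (Cons x ps)
  show ?case
  proof (cases ps)
    case Nil
    with Cons.prems show ?thesis by (auto simp: pick_n_swap_def fun_eq_iff)
  next
    case (Cons y ys)
    let ?c = "c(x := Some x)"
    have "x \<notin> set ps" "last ps \<noteq> x" using Cons.prems \<open>ps = y # ys\<close> by auto
    then have "successively (\<lambda>x y. ?c x = Some y) ps" "?c (last ps) = None"
      using Cons.prems \<open>ps = y # ys\<close> by (auto simp: successively_Cons intro: successively_mono)
    then have "exec_plan ps (?c, Some (hd ps)) = (\<lambda>z. if z \<in> set ps then Some z else ?c z, None)"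
      using Cons.prems \<open>ps = y # ys\<close> by (intro Cons.IH) auto
    moreover have "pick_n_swap x (c, Some x) = (?c, Some (hd ps))"
      using Cons.prems \<open>ps = y # ys\<close> by (simp add: pick_n_swap_def)
    moreover have "(\<lambda>z. if z \<in> set ps then Some z else ?c z) = (\<lambda>z. if z \<in> set (x # ps) then Some z else c z)"
      by (simp add: fun_eq_iff)
    ultimately show ?thesis
      by simp
  qed
qed simp

lemma exec_plan_cycle_from:
  assumes "cycle_from a i ps" "set ps \<subseteq> {1..m}"
  shows "exec_plan (i # ps) (init_state m a) = init_state m (\<lambda>x. if x \<in> set ps then x else a x)"
proof -
  let ?c = "(fst (init_state m a))(i := None)"
  have "i \<in> set ps" "follows a ps" "hd ps = a i"
    using assms(1) unfolding cycle_from_def by (auto simp: successively_Cons)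
  have c: "?c x = Some (a x)" if "x \<in> set (butlast ps)" for x
    using that assms set_butlast_distinct[of ps] unfolding cycle_from_def
    by (auto simp: init_state_def dest: in_set_butlastD)
  have "successively (\<lambda>x y. ?c x = Some y) ps"
    by (rule successively_mono_butlast[OF \<open>follows a ps\<close>]) (simp only: c)
  then have "exec_plan ps (?c, Some (hd ps)) = (\<lambda>x. if x \<in> set ps then Some x else ?c x, None)"
    using assms(1) unfolding cycle_from_def by (intro exec_plan_chain) auto
  moreover have "pick_n_swap i (init_state m a) = (?c, Some (hd ps))"
    using \<open>i \<in> set ps\<close> \<open>hd ps = a i\<close> assms(2) by (auto simp: pick_n_swap_def init_state_def)
  ultimately show ?thesis
    using \<open>i \<in> set ps\<close> assms(2) by (auto simp: init_state_def fun_eq_iff)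
qed

fun walk_length :: "nat \<Rightarrow> nat list \<Rightarrow> nat" where
  "walk_length p [] = 0"
| "walk_length p (q # qs) = cell_dist p q + walk_length q qs"

lemma travel_from_append:
  "travel_from p (xs @ ys) = walk_length p xs + travel_from (last (p # xs)) ys"
  by (induction xs arbitrary: p) auto

lemma walk_length_follows:
  "follows f (p # qs) \<Longrightarrow> walk_length p qs = (\<Sum>x\<leftarrow>butlast (p # qs). cell_dist x (f x))"
  by (induction qs arbitrary: p) auto

lemma walk_length_cycle_from:
  assumes "cycle_from f i ps"
  shows "walk_length i ps = (\<Sum>x\<in>set ps. cell_dist x (f x))"
proof -
  have "distinct (butlast (i # ps))"
    using assms set_butlast_distinct[of ps] unfolding cycle_from_def by (auto simp: distinct_butlast)
  then show ?thesis
    using walk_length_follows[of f i ps] assms cycle_from_set[OF assms]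
    by (simp add: cycle_from_def sum_list_distinct_conv_sum_set)
qed

lemma short_circuit_permutes:
  fixes a :: "nat \<Rightarrow> nat"
  assumes "a(i := g) permutes {1..m}" "i \<in> {1..m}" "g \<noteq> i"
  shows "a(g := g, i := a g) permutes {1..m}"
    and "card {x \<in> {1..m}. x \<noteq> i \<and> (a(g := g, i := a g)) x \<noteq> x}
           < card {x \<in> {1..m}. x \<noteq> i \<and> (a(i := g)) x \<noteq> x}"
proof -
  have "g \<in> {1..m}"
    using permutes_in_image[OF assms(1)] assms(2) by (metis fun_upd_same)
  moreover have "a(g := g, i := a g) = a(i := g) \<circ> Transposition.transpose g i"
    using assms(3) by (auto simp: Transposition.transpose_def fun_eq_iff)
  ultimately show "a(g := g, i := a g) permutes {1..m}"
    using permutes_compose[OF permutes_swap_id assms(1)] assms(2) by metis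
  have "(a(i := g)) g \<noteq> g"
    using permutes_inj[OF assms(1)] assms(3) by (metis fun_upd_same injD)
  with \<open>g \<in> {1..m}\<close> have "{x \<in> {1..m}. x \<noteq> i \<and> (a(g := g, i := a g)) x \<noteq> x}
      \<subset> {x \<in> {1..m}. x \<noteq> i \<and> (a(i := g)) x \<noteq> x}"
    using assms(3) by auto
  moreover have "finite {x \<in> {1..m}. x \<noteq> i \<and> (a(i := g)) x \<noteq> x}"
    by simp
  ultimately show "card {x \<in> {1..m}. x \<noteq> i \<and> (a(g := g, i := a g)) x \<noteq> x}
      < card {x \<in> {1..m}. x \<noteq> i \<and> (a(i := g)) x \<noteq> x}"
    using psubset_card_mono by blast
qed

text \<open>The inner loop started at cell \<open>i\<close> holding item \<open>g\<close> behaves as if \<open>g\<close> were back in cell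
  \<open>i\<close>: it walks around the cycle through \<open>i\<close> of the arrangement \<open>a(i := g)\<close>.\<close>
lemma sweep_inner_follows_cycle:
  assumes "a(i := g) permutes {1..m}" "i \<in> {1..m}"
    "card {x \<in> {1..m}. x \<noteq> i \<and> (a(i := g)) x \<noteq> x} \<le> f"
    "sweep_inner f i a g = (ps, a')"
  shows "cycle_from (a(i := g)) i ps \<and> a' permutes {1..m} \<and> a' = (\<lambda>x. if x \<in> set ps then x else (a(i := g)) x)"
  using assms
proof (induction f arbitrary: a g ps a')
  case 0
  then have "g = i"
    using short_circuit_permutes(2)[OF "0.prems"(1,2)] by fastforce
  moreover have "ps = [i]" "a' = a(i := g)"
    using "0.prems"(4) by simp_all
  ultimately show ?case
    using "0.prems"(1) by (auto simp: cycle_from_def fun_eq_iff)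
next
  case (Suc f)
  show ?case
  proof (cases "g = i")
    case True
    moreover have "ps = [i]" "a' = a(i := g)"
      using Suc.prems(4) True by simp_all
    ultimately show ?thesis
      using Suc.prems(1) by (auto simp: cycle_from_def fun_eq_iff)
  next
    case False
    let ?\<sigma> = "a(i := g)" and ?\<sigma>' = "a(g := g, i := a g)"
    obtain ps' where rec: "sweep_inner f i (a(g := g)) (a g) = (ps', a')" and ps: "ps = g # ps'"
      using Suc.prems(4) False by (auto split: prod.splits)
    have perm: "?\<sigma>' permutes {1..m}"
      by (rule short_circuit_permutes(1)[OF Suc.prems(1,2) False])
    have fuel: "card {x \<in> {1..m}. x \<noteq> i \<and> ?\<sigma>' x \<noteq> x} \<le> f"
      using short_circuit_permutes(2)[OF Suc.prems(1,2) False] Suc.prems(3) by simp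
    have "cycle_from ?\<sigma>' i ps' \<and> a' permutes {1..m} \<and> a' = (\<lambda>x. if x \<in> set ps' then x else ?\<sigma>' x)"
      by (rule Suc.IH[OF perm Suc.prems(2) fuel rec])
    then have cycle: "cycle_from ?\<sigma>' i ps'" and "a' permutes {1..m}"
      and a': "a' = (\<lambda>x. if x \<in> set ps' then x else ?\<sigma>' x)"
      by blast+
    have "?\<sigma>(g := g, i := ?\<sigma> g) = ?\<sigma>'"
      using False by (simp add: fun_upd_twist)
    then have "g \<notin> set ps' \<and> cycle_from ?\<sigma> i (g # ps')"
      using cycle_from_Cons[of ?\<sigma> g i ps'] cycle False by simp
    moreover have "i \<in> set ps'"
      using cycle by (rule cycle_from_last_in)
    ultimately have "a' = (\<lambda>x. if x \<in> set (g # ps') then x else ?\<sigma> x)"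
      unfolding a' using False by (auto simp: fun_eq_iff)
    with \<open>g \<notin> set ps' \<and> cycle_from ?\<sigma> i (g # ps')\<close> \<open>a' permutes {1..m}\<close> show ?thesis
      unfolding ps by blast
  qed
qed

definition misplaced :: "nat \<Rightarrow> (nat \<Rightarrow> nat) \<Rightarrow> nat set" where
  "misplaced m a = {x \<in> {1..m}. a x \<noteq> x}"

lemma finite_misplaced [simp]: "finite (misplaced m a)"
  by (simp add: misplaced_def)

lemma card_misplaced_le: "card (misplaced m a) \<le> m"
proof -
  have "card (misplaced m a) \<le> card {1..m}"
    by (rule card_mono) (auto simp: misplaced_def)
  then show ?thesis
    by simp
qed

lemma init_state_no_misplaced: "misplaced m a = {} \<Longrightarrow> init_state m a = goal_state m"
  by (auto simp: misplaced_def init_state_def goal_state_def fun_eq_iff)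

lemma sweep_outer_no_misplaced: "misplaced m a = {} \<Longrightarrow> sweep_outer f m a = []"
  by (cases f) (auto simp: misplaced_def)

lemma sweep_outer_step:
  fixes a :: "nat \<Rightarrow> nat"
  assumes "a permutes {1..m}" "misplaced m a \<noteq> {}"
  obtains i ps a' where
    "sweep_outer (Suc f) m a = i # ps @ sweep_outer f m a'"
    "a' = (\<lambda>x. if x \<in> set ps then x else a x)" "a' permutes {1..m}"
    "cycle_from a i ps" "i \<in> misplaced m a" "\<forall>x\<in>misplaced m a. i \<le> x"
    "set ps \<subseteq> misplaced m a" "misplaced m a' = misplaced m a - set ps"
proof -
  define i where "i = (LEAST i. i \<in> {1..m} \<and> a i \<noteq> i)"
  have ex: "\<exists>i\<in>{1..m}. a i \<noteq> i"
    using assms(2) by (auto simp: misplaced_def)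
  then have "i \<in> {1..m} \<and> a i \<noteq> i"
    unfolding i_def using LeastI_ex[of "\<lambda>i. i \<in> {1..m} \<and> a i \<noteq> i"] by blast
  moreover have "i \<le> x" if "x \<in> misplaced m a" for x
    unfolding i_def using that Least_le[of "\<lambda>i. i \<in> {1..m} \<and> a i \<noteq> i"] by (simp add: misplaced_def)
  ultimately have i: "i \<in> misplaced m a" "\<forall>x\<in>misplaced m a. i \<le> x"
    by (auto simp: misplaced_def)
  obtain ps a' where inner: "sweep_inner m i a (a i) = (ps, a')"
    by (metis surj_pair)
  have "card {x \<in> {1..m}. x \<noteq> i \<and> (a(i := a i)) x \<noteq> x} \<le> card {1..m}"
    by (rule card_mono) auto
  then have "cycle_from a i ps" "a' permutes {1..m}" and a': "a' = (\<lambda>x. if x \<in> set ps then x else a x)"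
    using sweep_inner_follows_cycle[of a i "a i" m m ps a'] assms(1) i(1) inner
    by (auto simp: misplaced_def)
  moreover have "sweep_outer (Suc f) m a = i # ps @ sweep_outer f m a'"
    using ex inner unfolding i_def by (simp add: Let_def)
  moreover have "set ps \<subseteq> misplaced m a"
    using cycle_from_moves[OF \<open>cycle_from a i ps\<close>] i(1) permutes_not_in[OF assms(1)]
    by (auto simp: misplaced_def)
  moreover from this have "misplaced m a' = misplaced m a - set ps"
    unfolding a' by (auto simp: misplaced_def)
  ultimately show ?thesis
    using that i a' by blast
qed

lemma sweep_outer_valid:
  fixes a :: "nat \<Rightarrow> nat"
  assumes "a permutes {1..m}" "card (misplaced m a) \<le> f"
  shows "set (sweep_outer f m a) \<subseteq> {1..m} \<and> exec_plan (sweep_outer f m a) (init_state m a) = goal_state m"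
  using assms
proof (induction f arbitrary: a)
  case (Suc f)
  show ?case
  proof (cases "misplaced m a = {}")
    case False
    then obtain i ps a' where unfold: "sweep_outer (Suc f) m a = i # ps @ sweep_outer f m a'"
      and a': "a' = (\<lambda>x. if x \<in> set ps then x else a x)" "a' permutes {1..m}"
      and cycle: "cycle_from a i ps" and "i \<in> misplaced m a" "set ps \<subseteq> misplaced m a"
      and "misplaced m a' = misplaced m a - set ps"
      by (rule sweep_outer_step[OF Suc.prems(1)]) blast
    moreover have "i \<in> set ps"
      using cycle by (rule cycle_from_last_in)
    ultimately have "misplaced m a' \<subset> misplaced m a"
      by blast
    then have "card (misplaced m a') < card (misplaced m a)"
      by (rule psubset_card_mono[OF finite_misplaced])
    then have IH: "set (sweep_outer f m a') \<subseteq> {1..m} \<and> exec_plan (sweep_outer f m a') (init_state m a') = goal_state m"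
      using Suc.IH[OF a'(2)] Suc.prems(2) by simp
    have "set ps \<subseteq> {1..m}"
      using \<open>set ps \<subseteq> misplaced m a\<close> by (auto simp: misplaced_def)
    with \<open>i \<in> set ps\<close> have "i \<in> {1..m}"
      by blast
    have "exec_plan (i # ps) (init_state m a) = init_state m a'"
      unfolding a'(1) using \<open>set ps \<subseteq> {1..m}\<close> by (rule exec_plan_cycle_from[OF cycle])
    with IH show ?thesis
      unfolding unfold using \<open>set ps \<subseteq> {1..m}\<close> \<open>i \<in> {1..m}\<close>
      by (simp add: exec_plan_append[of "i # ps", simplified])
  qed (simp add: sweep_outer_no_misplaced init_state_no_misplaced del: sweep_outer.simps)
qed (simp add: init_state_no_misplaced)

section \<open>Counting pick-n-swaps\<close>

definition visits :: "nat list \<Rightarrow> nat set \<Rightarrow> nat" where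
  "visits ps C = length (filter (\<lambda>q. q \<in> C) ps)"

lemma visits_Un_disjoint: "A \<inter> B = {} \<Longrightarrow> visits ps (A \<union> B) = visits ps A + visits ps B"
  unfolding visits_def by (induction ps) auto

definition untouched :: "nat set \<Rightarrow> lor_state \<Rightarrow> bool" where
  "untouched C s \<longleftrightarrow> (\<forall>c\<in>C. fst s c \<noteq> Some c \<and> snd s \<noteq> Some c \<and> (\<forall>x. fst s x = Some c \<longrightarrow> x \<in> C))"

text \<open>Every misplaced cell of \<open>C\<close> must still be visited; while the items of \<open>C\<close> are untouched,
  one more visit is needed, since the first visit to \<open>C\<close> leaves its cell misplaced.\<close>
definition cycle_potential :: "nat set \<Rightarrow> lor_state \<Rightarrow> nat" where
  "cycle_potential C s = card {c \<in> C. fst s c \<noteq> Some c} + (if untouched C s then 1 else 0)"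

lemma cycle_potential_pick_n_swap:
  assumes "finite C"
  shows "cycle_potential C s \<le> cycle_potential C (pick_n_swap q s) + (if q \<in> C then 1 else 0)"
proof -
  let ?s' = "pick_n_swap q s"
  consider "q \<notin> C" | "q \<in> C" "untouched C s" | "q \<in> C" "\<not> untouched C s"
    by blast
  then show ?thesis
  proof cases
    case 1
    then have "{c \<in> C. fst ?s' c \<noteq> Some c} = {c \<in> C. fst s c \<noteq> Some c}"
      and "untouched C s \<Longrightarrow> untouched C ?s'"
      by (auto simp: pick_n_swap_def untouched_def)
    with 1 show ?thesis
      by (simp add: cycle_potential_def)
  next
    case 2
    then have "{c \<in> C. fst ?s' c \<noteq> Some c} = {c \<in> C. fst s c \<noteq> Some c}"
      by (auto simp: pick_n_swap_def untouched_def)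
    with 2 show ?thesis
      by (simp add: cycle_potential_def)
  next
    case 3
    have "{c \<in> C. fst s c \<noteq> Some c} \<subseteq> insert q {c \<in> C. fst ?s' c \<noteq> Some c}"
      by (auto simp: pick_n_swap_def)
    then have "card {c \<in> C. fst s c \<noteq> Some c} \<le> card (insert q {c \<in> C. fst ?s' c \<noteq> Some c})"
      using assms by (intro card_mono) auto
    also have "\<dots> \<le> Suc (card {c \<in> C. fst ?s' c \<noteq> Some c})"
      by (rule card_insert_le_m1) auto
    finally show ?thesis
      using 3 by (simp add: cycle_potential_def)
  qed
qed

lemma cycle_potential_le_visits:
  assumes "finite C" "C \<noteq> {}" "C \<subseteq> {1..m}" "exec_plan ps s = goal_state m"
  shows "cycle_potential C s \<le> visits ps C"
  using assms(4)
proof (induction ps arbitrary: s)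
  case Nil
  obtain c where "c \<in> C"
    using assms(2) by blast
  have "\<forall>c\<in>C. fst s c = Some c"
    using Nil assms(3) by (auto simp: goal_state_def)
  then have "card {c \<in> C. fst s c \<noteq> Some c} = 0" "\<not> untouched C s"
    using \<open>c \<in> C\<close> by (auto simp: untouched_def card_eq_0_iff)
  then show ?case
    by (simp add: cycle_potential_def)
next
  case (Cons q ps)
  then have "cycle_potential C (pick_n_swap q s) \<le> visits ps C"
    by simp
  then show ?case
    using cycle_potential_pick_n_swap[OF assms(1), of s q] by (auto simp: visits_def split: if_splits)
qed

lemma valid_plan_visits_cycle:
  assumes "valid_plan m \<pi> ps" "\<pi> permutes {1..m}"
    and "C \<noteq> {}" "C \<subseteq> {1..m}" "\<pi> ` C = C" "\<forall>x\<in>C. \<pi> x \<noteq> x"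
  shows "card C + 1 \<le> visits ps C"
proof -
  have "x \<in> C" if "\<pi> x \<in> C" for x
  proof -
    have "\<pi> x \<in> \<pi> ` C"
      using that assms(5) by simp
    then obtain y where "y \<in> C" "\<pi> x = \<pi> y"
      by blast
    then show ?thesis
      using permutes_inj[OF assms(2)] by (simp add: inj_eq)
  qed
  then have "untouched C (init_state m \<pi>)"
    using assms(4,6) by (auto simp: untouched_def init_state_def split: if_splits)
  moreover have "{c \<in> C. fst (init_state m \<pi>) c \<noteq> Some c} = C"
    using assms(4,6) by (auto simp: init_state_def)
  ultimately have "cycle_potential C (init_state m \<pi>) = card C + 1"
    by (simp add: cycle_potential_def)
  moreover have "cycle_potential C (init_state m \<pi>) \<le> visits ps C"
    using assms(1,3,4) finite_subset[OF assms(4)]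
    by (intro cycle_potential_le_visits[of C m]) (simp_all add: valid_plan_def)
  ultimately show ?thesis
    by simp
qed

lemma valid_plan_visits_cycle_of_arrangement:
  assumes "valid_plan m \<pi> qs" "\<pi> permutes {1..m}"
    and "cycle_from a i ps" "set ps \<subseteq> misplaced m a" "\<forall>x\<in>misplaced m a. a x = \<pi> x"
  shows "length (i # ps) \<le> visits qs (set ps)"
proof -
  have agree: "\<pi> x = a x" if "x \<in> set ps" for x
    using that assms(4,5) by (metis subsetD)
  then have "\<pi> ` set ps = a ` set ps"
    by (rule image_cong[OF refl])
  then have "\<pi> ` set ps \<subseteq> set ps"
    using cycle_from_image[OF assms(3)] by simp
  then have "\<pi> ` set ps = set ps"
    using permutes_inj_on[OF assms(2)] by (intro endo_inj_surj) simp_all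
  moreover have "set ps \<subseteq> {1..m}" "\<forall>x\<in>set ps. \<pi> x \<noteq> x"
    using assms(4) agree by (auto simp: misplaced_def)
  moreover have "set ps \<noteq> {}"
    using cycle_from_last_in[OF assms(3)] by auto
  ultimately have "card (set ps) + 1 \<le> visits qs (set ps)"
    by (intro valid_plan_visits_cycle[OF assms(1,2)])
  moreover have "length ps = card (set ps)"
    using assms(3) by (simp add: cycle_from_def distinct_card)
  ultimately show ?thesis
    by simp
qed

lemma sweep_outer_length_le_visits:
  fixes a \<pi> :: "nat \<Rightarrow> nat"
  assumes "valid_plan m \<pi> qs" "\<pi> permutes {1..m}"
  shows "a permutes {1..m} \<Longrightarrow> \<forall>x\<in>misplaced m a. a x = \<pi> x \<Longrightarrow>
    length (sweep_outer f m a) \<le> visits qs (misplaced m a)"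
proof (induction f arbitrary: a)
  case (Suc f)
  show ?case
  proof (cases "misplaced m a = {}")
    case False
    then obtain i ps a' where unfold: "sweep_outer (Suc f) m a = i # ps @ sweep_outer f m a'"
      and a': "a' = (\<lambda>x. if x \<in> set ps then x else a x)" "a' permutes {1..m}"
      and cycle: "cycle_from a i ps" and C: "set ps \<subseteq> misplaced m a"
      and rest: "misplaced m a' = misplaced m a - set ps"
      by (rule sweep_outer_step[OF Suc.prems(1)]) blast
    have "length (i # ps) \<le> visits qs (set ps)"
      using valid_plan_visits_cycle_of_arrangement[OF assms cycle C Suc.prems(2)] .
    moreover have "\<forall>x\<in>misplaced m a - set ps. a' x = \<pi> x"
      using Suc.prems(2) by (simp add: a'(1))
    then have "length (sweep_outer f m a') \<le> visits qs (misplaced m a - set ps)"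
      using Suc.IH[OF a'(2)] unfolding rest by blast
    moreover have "visits qs (misplaced m a) = visits qs (set ps) + visits qs (misplaced m a - set ps)"
      using visits_Un_disjoint[of "set ps" "misplaced m a - set ps" qs] C by (simp add: Un_absorb1)
    ultimately show ?thesis
      unfolding unfold by simp
  qed (simp add: sweep_outer_no_misplaced del: sweep_outer.simps)
qed simp

section \<open>Bounds on the travel\<close>

definition total_displacement :: "nat \<Rightarrow> (nat \<Rightarrow> nat) \<Rightarrow> nat" where
  "total_displacement m a = (\<Sum>x\<in>{1..m}. cell_dist x (a x))"

definition item_offset :: "nat \<Rightarrow> nat option \<Rightarrow> nat" where
  "item_offset c ov = (case ov of None \<Rightarrow> 0 | Some l \<Rightarrow> cell_dist c l)"

text \<open>The end-effector at cell \<open>r\<close> counts as the cell of the held item.\<close>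
definition displacement_potential :: "nat \<Rightarrow> lor_state \<Rightarrow> nat \<Rightarrow> nat" where
  "displacement_potential m s r = (\<Sum>c\<in>{1..m}. item_offset c (fst s c)) + item_offset r (snd s)"

lemma cell_dist_triangle: "cell_dist a c \<le> cell_dist a b + cell_dist b c"
  unfolding cell_dist_def by auto

lemma displacement_potential_move:
  "displacement_potential m s r \<le> cell_dist r q + displacement_potential m s q"
  using cell_dist_triangle[of r _ q]
  by (auto simp: displacement_potential_def item_offset_def cell_dist_def split: option.splits)

lemma displacement_potential_pick_n_swap:
  assumes "q \<in> {1..m}"
  shows "displacement_potential m (pick_n_swap q s) q = displacement_potential m s q"
proof -
  have "(\<Sum>c\<in>{1..m}. item_offset c (((fst s)(q := snd s)) c))
      = item_offset q (snd s) + (\<Sum>c\<in>{1..m} - {q}. item_offset c (fst s c))"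
    using sum.remove[OF finite_atLeastAtMost assms, of "\<lambda>c. item_offset c (((fst s)(q := snd s)) c)"]
    by simp
  moreover have "(\<Sum>c\<in>{1..m}. item_offset c (fst s c))
      = item_offset q (fst s q) + (\<Sum>c\<in>{1..m} - {q}. item_offset c (fst s c))"
    using sum.remove[OF finite_atLeastAtMost assms, of "\<lambda>c. item_offset c (fst s c)"] by simp
  ultimately show ?thesis
    by (simp add: displacement_potential_def pick_n_swap_def)
qed

lemma displacement_potential_le_travel_from:
  "set ps \<subseteq> {1..m} \<Longrightarrow>
    displacement_potential m s r \<le> travel_from r ps + displacement_potential m (exec_plan ps s) 1"
proof (induction ps arbitrary: s r)
  case (Cons q ps)
  have "displacement_potential m s r \<le> cell_dist r q + displacement_potential m (pick_n_swap q s) q"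
    using displacement_potential_move[of m s r q] displacement_potential_pick_n_swap[of q m s] Cons.prems
    by simp
  also have "\<dots> \<le> cell_dist r q + travel_from q ps + displacement_potential m (exec_plan (q # ps) s) 1"
    using Cons by simp
  finally show ?case
    by simp
qed (simp add: displacement_potential_move)

lemma total_displacement_le_travel:
  assumes "valid_plan m \<pi> ps"
  shows "total_displacement m \<pi> \<le> travel ps"
proof -
  have "displacement_potential m (init_state m \<pi>) 1 = total_displacement m \<pi>"
    by (simp add: displacement_potential_def init_state_def item_offset_def total_displacement_def)
  moreover have "displacement_potential m (goal_state m) 1 = 0"
    by (simp add: displacement_potential_def goal_state_def item_offset_def cell_dist_def)
  ultimately show ?thesis
    using displacement_potential_le_travel_from[of ps m "init_state m \<pi>" 1] assms
    by (simp add: valid_plan_def travel_def)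
qed

lemma total_displacement_put_home:
  assumes "S \<subseteq> {1..m}"
  shows "total_displacement m a
    = (\<Sum>x\<in>S. cell_dist x (a x)) + total_displacement m (\<lambda>x. if x \<in> S then x else a x)"
proof -
  let ?a' = "\<lambda>x. if x \<in> S then x else a x"
  have "total_displacement m ?a' = (\<Sum>x\<in>{1..m} - S. cell_dist x (?a' x)) + (\<Sum>x\<in>S. cell_dist x (?a' x))"
    unfolding total_displacement_def by (rule sum.subset_diff[OF assms finite_atLeastAtMost])
  also have "\<dots> = (\<Sum>x\<in>{1..m} - S. cell_dist x (a x))"
    by (simp add: cell_dist_def)
  finally show ?thesis
    unfolding total_displacement_def
    using sum.subset_diff[OF assms finite_atLeastAtMost, of "\<lambda>x. cell_dist x (a x)"] by simp
qed

lemma travel_from_sweep_outer_le: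
  fixes a :: "nat \<Rightarrow> nat"
  assumes "a permutes {1..m}" "p \<in> {1..m}" "\<forall>x\<in>misplaced m a. p \<le> x"
  shows "travel_from p (sweep_outer f m a) \<le> total_displacement m a + (m - p) + (m - 1)"
  using assms
proof (induction f arbitrary: a p)
  case (Suc f)
  show ?case
  proof (cases "misplaced m a = {}")
    case False
    then obtain i ps a' where unfold: "sweep_outer (Suc f) m a = i # ps @ sweep_outer f m a'"
      and a': "a' = (\<lambda>x. if x \<in> set ps then x else a x)" "a' permutes {1..m}"
      and cycle: "cycle_from a i ps" and i: "i \<in> misplaced m a" "\<forall>x\<in>misplaced m a. i \<le> x"
      and C: "set ps \<subseteq> misplaced m a" and rest: "misplaced m a' = misplaced m a - set ps"
      by (rule sweep_outer_step[OF Suc.prems(1)]) blast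
    have "set ps \<subseteq> {1..m}" "i \<in> {1..m}" "p \<le> i"
      using C i Suc.prems(3) by (auto simp: misplaced_def)
    have "travel_from p (sweep_outer (Suc f) m a)
        = cell_dist p i + walk_length i ps + travel_from i (sweep_outer f m a')"
      using cycle unfolding unfold by (simp add: travel_from_append cycle_from_def)
    also have "\<dots> \<le> (i - p) + (\<Sum>x\<in>set ps. cell_dist x (a x)) + (total_displacement m a' + (m - i) + (m - 1))"
      using Suc.IH[OF a'(2) \<open>i \<in> {1..m}\<close>] i(2) rest \<open>p \<le> i\<close> walk_length_cycle_from[OF cycle]
      by (simp add: cell_dist_def)
    also have "\<dots> = total_displacement m a + (m - p) + (m - 1)"
      using total_displacement_put_home[OF \<open>set ps \<subseteq> {1..m}\<close>, of a] a'(1) \<open>p \<le> i\<close> \<open>i \<in> {1..m}\<close>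
      by simp
    finally show ?thesis .
  qed (use Suc.prems(2) in \<open>auto simp: sweep_outer_no_misplaced cell_dist_def simp del: sweep_outer.simps\<close>)
qed (auto simp: cell_dist_def)

lemma sweep_plan_valid: "\<pi> permutes {1..m} \<Longrightarrow> valid_plan m \<pi> (sweep_plan m \<pi>)"
  using sweep_outer_valid[OF _ card_misplaced_le] by (simp add: valid_plan_def sweep_plan_def)

lemma sweep_plan_length_le:
  assumes "\<pi> permutes {1..m}" "valid_plan m \<pi> ps"
  shows "length (sweep_plan m \<pi>) \<le> length ps"
proof -
  have "length (sweep_plan m \<pi>) \<le> visits ps (misplaced m \<pi>)"
    unfolding sweep_plan_def by (rule sweep_outer_length_le_visits[OF assms(2,1) assms(1)]) simp
  also have "\<dots> \<le> length ps"
    unfolding visits_def by simp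
  finally show ?thesis .
qed

lemma min_swaps_eq_length_sweep_plan:
  assumes "\<pi> permutes {1..m}"
  shows "min_swaps m \<pi> = length (sweep_plan m \<pi>)"
  unfolding min_swaps_def
proof (rule Least_equality)
  show "\<exists>ps. valid_plan m \<pi> ps \<and> length ps = length (sweep_plan m \<pi>)"
    using sweep_plan_valid[OF assms] by blast
qed (use sweep_plan_length_le[OF assms] in blast)

lemma opt_travel_le_sweep_plan:
  assumes "\<pi> permutes {1..m}"
  shows "opt_travel m \<pi> \<le> travel (sweep_plan m \<pi>)"
  unfolding opt_travel_def
  by (rule Least_le) (use sweep_plan_valid[OF assms] min_swaps_eq_length_sweep_plan[OF assms] in auto)

lemma total_displacement_le_opt_travel:
  assumes "\<pi> permutes {1..m}"
  shows "total_displacement m \<pi> \<le> opt_travel m \<pi>"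
proof -
  have "\<exists>ps. valid_plan m \<pi> ps \<and> length ps = min_swaps m \<pi> \<and> travel ps = opt_travel m \<pi>"
    unfolding opt_travel_def
    by (rule LeastI_ex) (use sweep_plan_valid[OF assms] min_swaps_eq_length_sweep_plan[OF assms] in auto)
  then show ?thesis
    using total_displacement_le_travel by metis
qed

lemma travel_sweep_plan_le:
  assumes "\<pi> permutes {1..m}"
  shows "travel (sweep_plan m \<pi>) \<le> total_displacement m \<pi> + 2 * m"
proof (cases "m = 0")
  case False
  then have "travel_from 1 (sweep_outer m m \<pi>) \<le> total_displacement m \<pi> + (m - 1) + (m - 1)"
    using travel_from_sweep_outer_le[OF assms] by (simp add: misplaced_def)
  then show ?thesis
    by (simp add: travel_def sweep_plan_def)
qed (simp add: sweep_plan_def travel_def cell_dist_def)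

section \<open>Expected travel\<close>

lemma card_permutations_pos: "0 < card {\<pi>. \<pi> permutes {1..(m::nat)}}"
  using card_permutations[of "{1..m}" m] by simp

lemma perm_expect_mono:
  "(\<And>\<pi>. \<pi> permutes {1..m} \<Longrightarrow> X \<pi> \<le> Y \<pi>) \<Longrightarrow> perm_expect m X \<le> perm_expect m Y"
  unfolding perm_expect_def by (rule divide_right_mono[OF sum_mono]) auto

lemma perm_expect_add_const: "perm_expect m (\<lambda>\<pi>. X \<pi> + c) = perm_expect m X + c"
  using card_permutations_pos[of m] by (simp add: perm_expect_def sum.distrib add_divide_distrib)

definition reflect :: "nat \<Rightarrow> nat \<Rightarrow> nat" where
  "reflect m x = (if x \<in> {1..m} then m + 1 - x else x)"

lemma reflect_reflect [simp]: "reflect m (reflect m x) = x"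
  unfolding reflect_def by auto

lemma reflect_permutes: "reflect m permutes {1..m}"
proof (rule bij_imp_permutes)
  show "bij_betw (reflect m) {1..m} {1..m}"
    by (rule bij_betw_byWitness[where f' = "reflect m"]) (auto simp: reflect_def)
qed (auto simp: reflect_def)

lemma real_cell_dist: "real (cell_dist a b) = \<bar>real a - real b\<bar>"
  unfolding cell_dist_def by auto

lemma sum_shifted_squares:
  "(\<Sum>x=1..n. (2 * real x - c)\<^sup>2)
    = 2 / 3 * real n * (real n + 1) * (2 * real n + 1) - 2 * c * real n * (real n + 1) + real n * c\<^sup>2"
proof (induction n)
  case (Suc n)
  then show ?case
    by (simp add: atLeastAtMostSuc_conv power2_eq_square field_simps)
qed simp

lemma sum_abs_centered_ge:
  assumes "1 \<le> m"
  shows "(real m ^ 2 - 1) / 3 \<le> (\<Sum>x=1..m. \<bar>2 * real x - real m - 1\<bar>)"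
proof -
  have "(2 * real x - (real m + 1))\<^sup>2 / real m \<le> \<bar>2 * real x - real m - 1\<bar>" if "x \<in> {1..m}" for x
  proof -
    have "\<bar>2 * real x - real m - 1\<bar> \<le> real m"
      using that by auto
    then have "\<bar>2 * real x - real m - 1\<bar> * \<bar>2 * real x - real m - 1\<bar> \<le> real m * \<bar>2 * real x - real m - 1\<bar>"
      by (rule mult_right_mono) simp
    then show ?thesis
      using assms by (simp add: divide_le_eq power2_eq_square algebra_simps)
  qed
  then have "(\<Sum>x=1..m. (2 * real x - (real m + 1))\<^sup>2) / real m \<le> (\<Sum>x=1..m. \<bar>2 * real x - real m - 1\<bar>)"
    unfolding sum_divide_distrib by (rule sum_mono)
  moreover have "(\<Sum>x=1..m. (2 * real x - (real m + 1))\<^sup>2) / real m = (real m ^ 2 - 1) / 3"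
    unfolding sum_shifted_squares using assms by (simp add: field_simps power2_eq_square)
  ultimately show ?thesis
    by linarith
qed

text \<open>Cell \<open>x\<close> is far from \<open>\<pi> x\<close> or from its mirror image, so pairing \<open>\<pi>\<close> with
  \<open>reflect m \<circ> \<pi>\<close> shows that the expected total displacement grows quadratically.\<close>
lemma total_displacement_reflect_ge:
  assumes "\<pi> permutes {1..m}"
  shows "(\<Sum>x=1..m. \<bar>2 * real x - real m - 1\<bar>)
    \<le> real (total_displacement m \<pi>) + real (total_displacement m (reflect m \<circ> \<pi>))"
proof -
  have "\<bar>2 * real x - real m - 1\<bar> \<le> real (cell_dist x (\<pi> x)) + real (cell_dist x (reflect m (\<pi> x)))"
    if "x \<in> {1..m}" for x
  proof -
    have "\<pi> x \<in> {1..m}"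
      using permutes_in_image[OF assms] that by simp
    then have "real (reflect m (\<pi> x)) = real m + 1 - real (\<pi> x)"
      by (auto simp: reflect_def)
    then show ?thesis
      by (simp add: real_cell_dist)
  qed
  then have "(\<Sum>x=1..m. \<bar>2 * real x - real m - 1\<bar>)
      \<le> (\<Sum>x=1..m. real (cell_dist x (\<pi> x)) + real (cell_dist x (reflect m (\<pi> x))))"
    by (rule sum_mono)
  then show ?thesis
    by (simp add: total_displacement_def sum.distrib)
qed

lemma expected_total_displacement_ge:
  assumes "1 \<le> m"
  shows "(real m ^ 2 - 1) / 6 \<le> perm_expect m (\<lambda>\<pi>. real (total_displacement m \<pi>))"
proof -
  define P where "P = {\<pi>. \<pi> permutes {1..m}}"
  define K where "K = (\<Sum>x=1..m. \<bar>2 * real x - real m - 1\<bar>)"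
  have "\<pi> \<in> P \<Longrightarrow> reflect m \<circ> \<pi> \<in> P" for \<pi>
    unfolding P_def using permutes_compose[OF _ reflect_permutes] by blast
  then have "(\<Sum>\<pi>\<in>P. real (total_displacement m (reflect m \<circ> \<pi>))) = (\<Sum>\<pi>\<in>P. real (total_displacement m \<pi>))"
    by (intro sum.reindex_bij_witness[of _ "\<lambda>\<pi>. reflect m \<circ> \<pi>" "\<lambda>\<pi>. reflect m \<circ> \<pi>"])
      (auto simp: fun_eq_iff)
  moreover have "real (card P) * K \<le> (\<Sum>\<pi>\<in>P. real (total_displacement m \<pi>) + real (total_displacement m (reflect m \<circ> \<pi>)))"
    using sum_mono[of P "\<lambda>_. K"] total_displacement_reflect_ge by (simp add: P_def K_def)
  ultimately have "real (card P) * K / 2 \<le> (\<Sum>\<pi>\<in>P. real (total_displacement m \<pi>))"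
    by (simp add: sum.distrib)
  moreover have "0 < card P"
    unfolding P_def by (rule card_permutations_pos)
  ultimately have "K / 2 \<le> perm_expect m (\<lambda>\<pi>. real (total_displacement m \<pi>))"
    unfolding perm_expect_def P_def[symmetric] by (simp add: field_simps)
  then show ?thesis
    using sum_abs_centered_ge[OF assms] unfolding K_def by simp
qed

lemma ratio_bounds_of_sandwich:
  fixes a b c d :: real
  assumes "0 < a" "a \<le> b" "b \<le> c" "c \<le> a + d"
  shows "1 \<le> c / b \<and> c / b \<le> 1 + d / a"
proof
  show "1 \<le> c / b"
    using assms by simp
  have "c / b \<le> (a + d) / a"
    using assms by (intro frac_le) auto
  then show "c / b \<le> 1 + d / a"
    using assms by (simp add: add_divide_distrib)
qed

lemma expected_travel_ratio_bounds:
  assumes "2 \<le> m"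
  shows "1 \<le> perm_expect m (\<lambda>\<pi>. real (travel (sweep_plan m \<pi>))) / perm_expect m (\<lambda>\<pi>. real (opt_travel m \<pi>))
    \<and> perm_expect m (\<lambda>\<pi>. real (travel (sweep_plan m \<pi>))) / perm_expect m (\<lambda>\<pi>. real (opt_travel m \<pi>))
      \<le> 1 + 24 / real m"
    (is "1 \<le> ?ES / ?EO \<and> _")
proof -
  let ?ET = "perm_expect m (\<lambda>\<pi>. real (total_displacement m \<pi>))"
  have ET_EO: "?ET \<le> ?EO"
    by (rule perm_expect_mono) (simp add: total_displacement_le_opt_travel)
  have EO_ES: "?EO \<le> ?ES"
    by (rule perm_expect_mono) (simp add: opt_travel_le_sweep_plan)
  have "?ES \<le> perm_expect m (\<lambda>\<pi>. real (total_displacement m \<pi>) + 2 * real m)"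
  proof (rule perm_expect_mono)
    fix \<pi> :: "nat \<Rightarrow> nat"
    assume "\<pi> permutes {1..m}"
    then have "real (travel (sweep_plan m \<pi>)) \<le> real (total_displacement m \<pi> + 2 * m)"
      using travel_sweep_plan_le of_nat_mono by blast
    then show "real (travel (sweep_plan m \<pi>)) \<le> real (total_displacement m \<pi>) + 2 * real m"
      by simp
  qed
  then have ES_ET: "?ES \<le> ?ET + 2 * real m"
    by (simp only: perm_expect_add_const)
  have "real m ^ 2 / 12 \<le> (real m ^ 2 - 1) / 6"
    using assms power_mono[of 2 "real m" 2] by simp
  then have ET_ge: "real m ^ 2 / 12 \<le> ?ET"
    using expected_total_displacement_ge[of m] assms by simp
  have pos: "0 < real m ^ 2 / 12"
    using assms by simp
  have "0 < ?ET"
    using pos ET_ge by linarith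
  then have "1 \<le> ?ES / ?EO \<and> ?ES / ?EO \<le> 1 + 2 * real m / ?ET"
    by (rule ratio_bounds_of_sandwich[OF _ ET_EO EO_ES ES_ET])
  moreover have "2 * real m / ?ET \<le> 2 * real m / (real m ^ 2 / 12)"
    using pos \<open>0 < ?ET\<close> by (intro divide_left_mono[OF ET_ge]) simp_all
  moreover have "2 * real m / (real m ^ 2 / 12) = 24 / real m"
    using assms by (simp add: power2_eq_square)
  ultimately show ?thesis
    by linarith
qed

theorem proposition2:
  shows "(\<forall>m \<pi>. \<pi> permutes {1..m} \<longrightarrow>
            valid_plan m \<pi> (sweep_plan m \<pi>) \<and>
            (\<forall>ps. valid_plan m \<pi> ps \<longrightarrow> length (sweep_plan m \<pi>) \<le> length ps))
       \<and> (\<lambda>m. perm_expect m (\<lambda>\<pi>. real (travel (sweep_plan m \<pi>)))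
              / perm_expect m (\<lambda>\<pi>. real (opt_travel m \<pi>))) \<longlonglongrightarrow> 1"
    (is "?minimal \<and> (\<lambda>m. ?ratio m) \<longlonglongrightarrow> 1")
proof
  show ?minimal
    using sweep_plan_valid sweep_plan_length_le by blast
  have lower: "\<forall>\<^sub>F m in sequentially. 1 \<le> ?ratio m"
    by (rule eventually_sequentiallyI[of 2]) (simp add: expected_travel_ratio_bounds)
  have upper: "\<forall>\<^sub>F m in sequentially. ?ratio m \<le> 1 + 24 / real m"
    by (rule eventually_sequentiallyI[of 2]) (simp add: expected_travel_ratio_bounds)
  have "(\<lambda>m. 1 + 24 / real m) \<longlonglongrightarrow> 1"
    using tendsto_add[OF tendsto_const lim_const_over_n[of 24]] by simp
  then show "(\<lambda>m. ?ratio m) \<longlonglongrightarrow> 1"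
    by (rule tendsto_sandwich[OF lower upper tendsto_const])
qed

end
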